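(* Let $f:E\to\mathbb{R}$ be $L$-smooth and $1$-weakly-quasi-convex with respect to a minimizer $x_*$ (in particular, this holds if $f$ is convex and $L$-smooth with minimizer $x_*$). Let Algorithm AGMsDR (either option) be run from $x^0$ for $N\ge1$ steps. Then $$\min_{k=\lceil N/2\rceil,\dots,N}\|\nabla f(y^k)\|_*^2\le\frac{64L^2V(x_*,x^0)}{N^3},\qquad f(x^N)-f(x_* )\le\frac{4LV(x_*,x^0)}{N^2}.$$
   Context: $E$ is a finite-dimensional real vector space with a norm $\|\cdot\|$; $E^*$ is its dual, $\langle g,x\rangle$ denotes the value of $g\in E^*$ at $x\in E$, and $\|g\|_*=\max\{\langle g,x\rangle:\|x\|\le 1\}$. For $g\in E^*$, $g^{\#}$ denotes a (fixed) element $s\in E$ with $\|s\|\le 1$ and $\langle g,s\rangle=\|g\|_*$. A prox-function $d:E\to\mathbb{R}$ is continuously differentiable, convex, $1$-strongly convex with respect to $\|\cdot\|$ (i.e. $d(y)-d(x)-\langle\nabla d(x),y-x\rangle\ge\frac12\|y-x\|^2$ for all $x,y\in E$) and satisfies $\min_E d=0$; its Bregman divergence is $V(x,z)=d(x)-d(z)-\langle\nabla d(z),x-z\rangle$. A function $f:E\to\mathbb{R}$ is $L$-smooth ($L>0$) if it is continuously differentiable and $\|\nabla f(x)-\nabla f(y)\|_*\le L\|x-y\|$ for all $x,y\in E$. A differentiable $f$ with a minimizer $x_*$ is $\gamma$-weakly-quasi-convex ($\gamma\in(0,1]$) if $\gamma(f(x)-f(x_* ))\le\langle\nabla f(x),x-x_*\rangle$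 for all $x\in E$. Algorithm AGMsDR (input $x^0\in E$, and $L$ for Option (a)): set $A_0=0$, $v^0=x^0$, $\psi_0(x)=V(x,x^0)$. For $k=0,1,2,\dots$: 1. Choose $\beta_k\in\arg\min_{\beta\in[0,1]} f(v^k+\beta(x^k-v^k))$ (a global minimizer over the interval) and set $y^k=v^k+\beta_k(x^k-v^k)$. 2. Option (a): $x^{k+1}\in\arg\min_{x\in E}\{f(y^k)+\langle\nabla f(y^k),x-y^k\rangle+\frac L2\|x-y^k\|^2\}$, and $a_{k+1}>0$ solves $\frac{a_{k+1}^2}{A_k+a_{k+1}}=\frac1L$. Option (b): $h_{k+1}\in\arg\min_{h\ge0} f(y^k-h(\nabla f(y^k))^{\#})$, $x^{k+1}=y^k-h_{k+1}(\nabla f(y^k))^{\#}$, and $a_{k+1}$ is the largest solution of $f(y^k)-\frac{a_{k+1}^2}{2(A_k+a_{k+1})}\|\nabla f(y^k)\|_*^2=f(x^{k+1})$. 3. $A_{k+1}=A_k+a_{k+1}$; $\psi_{k+1}(x)=\psi_k(x)+a_{k+1}\{f(y^k)+\langle\nabla f(y^k),x-y^k\rangle\}$; $v^{k+1}=\arg\min_{x\in E}\psi_{k+1}(x)$. It is assumed that all the minima in the algorithm are attained, and that $\nabla f(y^k)\neq 0$ for all iterations considered (otherwise $y^k$ is a stationary point and the method stops). *)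

theory Defs
  imports "HOL-Analysis.Analysis"
begin

text \<open>The finite-dimensional space E is modelled by a type 'a :: euclidean_space.
  The norm of the paper is an arbitrary norm nrm on it (not necessarily the Euclidean one).
  The dual space E* is identified with 'a via the inner product: a functional g acts
  by x \<mapsto> g \<bullet> x.\<close>

definition is_norm :: "('a::real_vector \<Rightarrow> real) \<Rightarrow> bool" where
  "is_norm nrm \<longleftrightarrow>
     (\<forall>x. nrm x = 0 \<longleftrightarrow> x = 0) \<and>
     (\<forall>x y. nrm (x + y) \<le> nrm x + nrm y) \<and>
     (\<forall>c x. nrm (c *\<^sub>R x) = \<bar>c\<bar> * nrm x)"

definition dual_norm :: "('a::real_inner \<Rightarrow> real) \<Rightarrow> 'a \<Rightarrow> real" where
  "dual_norm nrm g = Sup ((\<lambda>x. g \<bullet> x) ` {x. nrm x \<le> 1})"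

definition is_sharp :: "('a::real_inner \<Rightarrow> real) \<Rightarrow> ('a \<Rightarrow> 'a) \<Rightarrow> bool" where
  "is_sharp nrm sharp \<longleftrightarrow> (\<forall>g. nrm (sharp g) \<le> 1 \<and> g \<bullet> sharp g = dual_norm nrm g)"

definition is_gradient :: "('a::real_inner \<Rightarrow> real) \<Rightarrow> ('a \<Rightarrow> 'a) \<Rightarrow> bool" where
  "is_gradient f gradf \<longleftrightarrow> (\<forall>x. (f has_derivative (\<lambda>h. gradf x \<bullet> h)) (at x))"

definition L_smooth :: "('a::real_inner \<Rightarrow> real) \<Rightarrow> ('a \<Rightarrow> real) \<Rightarrow> ('a \<Rightarrow> 'a) \<Rightarrow> real \<Rightarrow> bool" where
  "L_smooth nrm f gradf L \<longleftrightarrow> L > 0 \<and> is_gradient f gradf \<and> continuous_on UNIV gradf \<and>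
     (\<forall>x y. dual_norm nrm (gradf x - gradf y) \<le> L * nrm (x - y))"

definition weakly_quasi_convex :: "('a::real_inner \<Rightarrow> real) \<Rightarrow> ('a \<Rightarrow> 'a) \<Rightarrow> real \<Rightarrow> 'a \<Rightarrow> bool" where
  "weakly_quasi_convex f gradf \<gamma> xs \<longleftrightarrow> 0 < \<gamma> \<and> \<gamma> \<le> 1 \<and> (\<forall>x. f xs \<le> f x) \<and>
     (\<forall>x. \<gamma> * (f x - f xs) \<le> gradf x \<bullet> (x - xs))"

definition prox_function :: "('a::real_inner \<Rightarrow> real) \<Rightarrow> ('a \<Rightarrow> real) \<Rightarrow> ('a \<Rightarrow> 'a) \<Rightarrow> bool" where
  "prox_function nrm d gradd \<longleftrightarrow> is_gradient d gradd \<and> continuous_on UNIV gradd \<and>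
     convex_on UNIV d \<and>
     (\<forall>x y. d y - d x - gradd x \<bullet> (y - x) \<ge> 1/2 * (nrm (y - x))\<^sup>2) \<and>
     (\<forall>x. 0 \<le> d x) \<and> (\<exists>x. d x = 0)"

definition bregman :: "('a::real_inner \<Rightarrow> real) \<Rightarrow> ('a \<Rightarrow> 'a) \<Rightarrow> 'a \<Rightarrow> 'a \<Rightarrow> real" where
  "bregman d gradd x z = d x - d z - gradd z \<bullet> (x - z)"

definition agm_psi :: "('a::real_inner \<Rightarrow> real) \<Rightarrow> ('a \<Rightarrow> 'a) \<Rightarrow> ('a \<Rightarrow> real) \<Rightarrow> ('a \<Rightarrow> 'a)
    \<Rightarrow> 'a \<Rightarrow> (nat \<Rightarrow> real) \<Rightarrow> (nat \<Rightarrow> 'a) \<Rightarrow> nat \<Rightarrow> 'a \<Rightarrow> real" where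
  "agm_psi f gradf d gradd x0 a y k z =
     bregman d gradd z x0 + (\<Sum>i<k. a (Suc i) * (f (y i) + gradf (y i) \<bullet> (z - y i)))"

text \<open>A run of N steps of AGMsDR. optA = True: Option (a) in every step; optA = False:
  Option (b) in every step. Step 1 is performed for k <= N (so that y^N is defined),
  steps 2 and 3 for k < N.\<close>
definition AGMsDR_run :: "('a::real_inner \<Rightarrow> real) \<Rightarrow> ('a \<Rightarrow> real) \<Rightarrow> ('a \<Rightarrow> 'a) \<Rightarrow>
    ('a \<Rightarrow> real) \<Rightarrow> ('a \<Rightarrow> 'a) \<Rightarrow> ('a \<Rightarrow> 'a) \<Rightarrow> real \<Rightarrow> bool \<Rightarrow> nat \<Rightarrow>
    (nat \<Rightarrow> 'a) \<Rightarrow> (nat \<Rightarrow> 'a) \<Rightarrow> (nat \<Rightarrow> 'a) \<Rightarrow> (nat \<Rightarrow> real) \<Rightarrow> (nat \<Rightarrow> real) \<Rightarrow>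
    (nat \<Rightarrow> real) \<Rightarrow> (nat \<Rightarrow> real) \<Rightarrow> bool" where
  "AGMsDR_run nrm f gradf d gradd sharp L optA N x v y beta h a A \<longleftrightarrow>
     A 0 = 0 \<and> v 0 = x 0 \<and>
     (\<forall>k\<le>N. 0 \<le> beta k \<and> beta k \<le> 1 \<and>
        (\<forall>b\<in>{0..1}. f (v k + beta k *\<^sub>R (x k - v k)) \<le> f (v k + b *\<^sub>R (x k - v k))) \<and>
        y k = v k + beta k *\<^sub>R (x k - v k)) \<and>
     (\<forall>k<N.
        (if optA then
           (\<forall>z. f (y k) + gradf (y k) \<bullet> (x (Suc k) - y k) + L / 2 * (nrm (x (Suc k) - y k))\<^sup>2
                 \<le> f (y k) + gradf (y k) \<bullet> (z - y k) + L / 2 * (nrm (z - y k))\<^sup>2) \<and>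
           a (Suc k) > 0 \<and> (a (Suc k))\<^sup>2 / (A k + a (Suc k)) = 1 / L
         else
           h (Suc k) \<ge> 0 \<and>
           (\<forall>t\<ge>0. f (y k - h (Suc k) *\<^sub>R sharp (gradf (y k))) \<le> f (y k - t *\<^sub>R sharp (gradf (y k)))) \<and>
           x (Suc k) = y k - h (Suc k) *\<^sub>R sharp (gradf (y k)) \<and>
           is_arg_max id (\<lambda>s. f (y k) - s\<^sup>2 / (2 * (A k + s)) * (dual_norm nrm (gradf (y k)))\<^sup>2
                                  = f (x (Suc k))) (a (Suc k))) \<and>
        A (Suc k) = A k + a (Suc k) \<and>
        (\<forall>z. agm_psi f gradf d gradd (x 0) a y (Suc k) (v (Suc k))
               \<le> agm_psi f gradf d gradd (x 0) a y (Suc k) z))"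

end

theory Submission
  imports Defs
begin

text \<open>An estimate-sequence argument. Let \<open>V = V(x\<^sub>*, x\<^sup>0)\<close>. By induction,
  \<open>A\<^sub>k f(x\<^sup>k) \<le> min \<psi>\<^sub>k\<close>: the exact line search for \<open>y\<^sup>k\<close> gives \<open>f(y\<^sup>k) \<le> f(x\<^sup>k)\<close> and
  \<open>\<langle>\<nabla>f(y\<^sup>k), v\<^sup>k - y\<^sup>k\<rangle> \<ge> 0\<close>, the 1-strong convexity of \<open>\<psi>\<^sub>k\<close> absorbs the new linear term, and either
  option makes \<open>f\<close> drop from \<open>y\<^sup>k\<close> to \<open>x\<^sup>k\<^sup>+\<^sup>1\<close> by at least \<open>a\<^sub>k\<^sub>+\<^sub>1\<^sup>2 \<parallel>\<nabla>f(y\<^sup>k)\<parallel>\<^sub>*\<^sup>2 / (2 A\<^sub>k\<^sub>+\<^sub>1)\<close>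
  with \<open>A\<^sub>k\<^sub>+\<^sub>1 \<le> L a\<^sub>k\<^sub>+\<^sub>1\<^sup>2\<close>. Weak quasi-convexity gives \<open>\<psi>\<^sub>k(x\<^sub>*) \<le> V + A\<^sub>k f(x\<^sub>*)\<close>, hence
  \<open>f(x\<^sup>k) - f(x\<^sub>*) \<le> V / A\<^sub>k\<close>, and \<open>A\<^sub>k\<^sub>+\<^sub>1 \<le> L (A\<^sub>k\<^sub>+\<^sub>1 - A\<^sub>k)\<^sup>2\<close> forces \<open>A\<^sub>k \<ge> k\<^sup>2/(4L)\<close>.
  Since every step also lowers \<open>f\<close> by at least \<open>\<parallel>\<nabla>f(y\<^sup>k)\<parallel>\<^sub>*\<^sup>2/(2L)\<close>, the squared gradient norms for
  \<open>k = m..N\<close>, \<open>m = \<lceil>N/2\<rceil>\<close>, sum to at most \<open>2L (f(x\<^sup>m) - f(x\<^sub>*)) \<le> 8L\<^sup>2V/m\<^sup>2\<close>; their minimum is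
  at most their average.\<close>

context
  fixes nrm :: "'a::real_vector \<Rightarrow> real"
  assumes nrm: "is_norm nrm"
begin

lemma is_norm_eq_0_iff: "nrm x = 0 \<longleftrightarrow> x = 0"
  using nrm unfolding is_norm_def by blast

lemma is_norm_triangle: "nrm (x + y) \<le> nrm x + nrm y"
  using nrm unfolding is_norm_def by blast

lemma is_norm_scaleR: "nrm (c *\<^sub>R x) = \<bar>c\<bar> * nrm x"
  using nrm unfolding is_norm_def by blast

lemma is_norm_zero [simp]: "nrm 0 = 0"
  by (simp add: is_norm_eq_0_iff)

lemma is_norm_minus [simp]: "nrm (- x) = nrm x"
  using is_norm_scaleR[of "-1" x] by simp

lemma is_norm_minus_commute: "nrm (x - y) = nrm (y - x)"
  using is_norm_minus[of "x - y"] by simp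

lemma is_norm_nonneg: "0 \<le> nrm x"
  using is_norm_triangle[of x "- x"] by simp

lemma is_norm_sum: "nrm (sum g S) \<le> (\<Sum>i\<in>S. nrm (g i))"
  by (induction S rule: infinite_finite_induct) (auto intro: order_trans[OF is_norm_triangle])

end

context
  fixes nrm :: "'a::euclidean_space \<Rightarrow> real"
  assumes nrm: "is_norm nrm"
begin

declare is_norm_zero[OF nrm, simp] is_norm_minus[OF nrm, simp]

lemma is_norm_le_norm:
  obtains M where "0 \<le> M" "\<And>x. nrm x \<le> M * norm x"
proof
  define M where "M = (\<Sum>b\<in>Basis. nrm (b::'a))"
  show "0 \<le> M"
    unfolding M_def by (rule sum_nonneg) (simp add: is_norm_nonneg[OF nrm])
  fix x :: 'a
  have "nrm x = nrm (\<Sum>b\<in>Basis. (x \<bullet> b) *\<^sub>R b)"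
    by (simp add: euclidean_representation)
  also have "\<dots> \<le> (\<Sum>b\<in>Basis. nrm ((x \<bullet> b) *\<^sub>R b))"
    by (rule is_norm_sum[OF nrm])
  also have "\<dots> = (\<Sum>b\<in>Basis. \<bar>x \<bullet> b\<bar> * nrm b)"
    by (simp add: is_norm_scaleR[OF nrm])
  also have "\<dots> \<le> (\<Sum>b\<in>Basis. norm x * nrm b)"
    by (intro sum_mono mult_right_mono) (auto simp: Basis_le_norm is_norm_nonneg[OF nrm])
  finally show "nrm x \<le> M * norm x"
    by (simp add: M_def sum_distrib_left mult.commute)
qed

lemma is_norm_continuous: "continuous_on UNIV nrm"
proof -
  obtain M where M: "0 \<le> M" "\<And>x. nrm x \<le> M * norm x"
    using is_norm_le_norm by blast
  have "\<bar>nrm x - nrm z\<bar> \<le> M * dist x z" for x z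
    using is_norm_triangle[OF nrm, of "x - z" z] is_norm_triangle[OF nrm, of "z - x" x]
      M(2)[of "x - z"] is_norm_minus_commute[OF nrm, of x z]
    by (simp add: dist_norm abs_le_iff)
  then have "M-lipschitz_on UNIV nrm"
    by (intro lipschitz_onI) (auto simp: dist_real_def M(1))
  then show ?thesis
    by (rule lipschitz_on_continuous_on)
qed

lemma norm_le_is_norm:
  obtains c where "0 < c" "\<And>x. c * norm x \<le> nrm x"
proof -
  obtain u where u: "u \<in> sphere 0 1" "\<And>z. z \<in> sphere 0 1 \<Longrightarrow> nrm u \<le> nrm z"
    using continuous_attains_inf[of "sphere (0::'a) 1" nrm]
      continuous_on_subset[OF is_norm_continuous] by auto
  have "u \<noteq> 0"
    using u(1) by auto
  then have "0 < nrm u"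
    using is_norm_eq_0_iff[OF nrm, of u] is_norm_nonneg[OF nrm, of u] by linarith
  moreover have "nrm u * norm x \<le> nrm x" for x
  proof (cases "x = 0")
    case False
    then have "nrm u \<le> nrm ((1 / norm x) *\<^sub>R x)"
      by (intro u(2)) simp
    with False show ?thesis
      by (simp add: is_norm_scaleR[OF nrm] field_simps)
  qed simp
  ultimately show ?thesis
    using that by blast
qed

lemma inner_le_dual_norm_unit:
  assumes "nrm x \<le> 1"
  shows "g \<bullet> x \<le> dual_norm nrm g"
proof -
  obtain c where c: "0 < c" "\<And>x. c * norm x \<le> nrm x"
    using norm_le_is_norm by blast
  have "bdd_above ((\<lambda>x. g \<bullet> x) ` {x. nrm x \<le> 1})"
  proof (rule bdd_aboveI2)
    fix x assume "x \<in> {x. nrm x \<le> 1}"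
    then have "norm x \<le> 1 / c"
      using c by (auto simp: field_simps intro: order_trans)
    then show "g \<bullet> x \<le> norm g / c"
      using norm_cauchy_schwarz[of g x] mult_left_mono[of "norm x" "1 / c" "norm g"] by simp
  qed
  then show ?thesis
    unfolding dual_norm_def using assms by (auto intro: cSUP_upper)
qed

lemma inner_le_dual_norm: "g \<bullet> z \<le> dual_norm nrm g * nrm z"
proof (cases "z = 0")
  case False
  then have pos: "0 < nrm z"
    using is_norm_eq_0_iff[OF nrm, of z] is_norm_nonneg[OF nrm, of z] by linarith
  then have "g \<bullet> ((1 / nrm z) *\<^sub>R z) \<le> dual_norm nrm g"
    by (intro inner_le_dual_norm_unit) (simp add: is_norm_scaleR[OF nrm])
  with pos show ?thesis
    by (simp add: field_simps)
qed simp

lemma dual_norm_nonneg: "0 \<le> dual_norm nrm g"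
  using inner_le_dual_norm_unit[of 0 g] by simp

lemma dual_norm_pos: "g \<noteq> 0 \<Longrightarrow> 0 < dual_norm nrm g"
  using inner_le_dual_norm[of g g] dual_norm_nonneg[of g]
  by (metis inner_gt_zero_iff mult_eq_0_iff order.not_eq_order_implies_strict order_less_le_trans)

end

lemma has_real_derivative_along_line:
  assumes "is_gradient f gradf"
  shows "((\<lambda>t. f (p + t *\<^sub>R w)) has_real_derivative gradf (p + t *\<^sub>R w) \<bullet> w) (at t)"
proof -
  have "((\<lambda>t. p + t *\<^sub>R w) has_derivative (\<lambda>s. s *\<^sub>R w)) (at t)"
    by (auto intro!: derivative_eq_intros)
  moreover have "(f has_derivative (\<lambda>u. gradf (p + t *\<^sub>R w) \<bullet> u)) (at (p + t *\<^sub>R w))"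
    using assms unfolding is_gradient_def by blast
  ultimately have "((\<lambda>t. f (p + t *\<^sub>R w)) has_derivative (\<lambda>s. gradf (p + t *\<^sub>R w) \<bullet> (s *\<^sub>R w))) (at t)"
    by (rule has_derivative_compose)
  moreover have "(\<lambda>s. gradf (p + t *\<^sub>R w) \<bullet> (s *\<^sub>R w)) = (*) (gradf (p + t *\<^sub>R w) \<bullet> w)"
    by (auto simp: fun_eq_iff)
  ultimately show ?thesis
    by (simp add: has_field_derivative_def)
qed

lemma L_smooth_upper_bound:
  fixes nrm :: "'a::euclidean_space \<Rightarrow> real"
  assumes nrm: "is_norm nrm" and smooth: "L_smooth nrm f gradf L"
  shows "f (p + z) \<le> f p + gradf p \<bullet> z + L / 2 * (nrm z)\<^sup>2"
proof -
  have grad: "is_gradient f gradf"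
    and lip: "\<And>x y. dual_norm nrm (gradf x - gradf y) \<le> L * nrm (x - y)"
    using smooth unfolding L_smooth_def by auto
  define \<phi> where "\<phi> t = f (p + t *\<^sub>R z) - t * (gradf p \<bullet> z) - L / 2 * t\<^sup>2 * (nrm z)\<^sup>2" for t
  have "\<phi> 1 \<le> \<phi> 0"
  proof (rule DERIV_nonpos_imp_nonincreasing[of 0 1])
    fix t :: real assume t: "0 \<le> t" "t \<le> 1"
    have deriv: "DERIV \<phi> t :> gradf (p + t *\<^sub>R z) \<bullet> z - gradf p \<bullet> z - L / 2 * (2 * t) * (nrm z)\<^sup>2"
      unfolding \<phi>_def
      by (rule has_real_derivative_along_line[OF grad] derivative_eq_intros refl | simp)+
    have "(gradf (p + t *\<^sub>R z) - gradf p) \<bullet> z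
        \<le> dual_norm nrm (gradf (p + t *\<^sub>R z) - gradf p) * nrm z"
      by (rule inner_le_dual_norm[OF nrm])
    also have "\<dots> \<le> L * nrm (t *\<^sub>R z) * nrm z"
      using lip[of "p + t *\<^sub>R z" p] by (simp add: mult_right_mono is_norm_nonneg[OF nrm])
    also have "\<dots> = L * t * (nrm z)\<^sup>2"
      using t by (simp add: is_norm_scaleR[OF nrm] power2_eq_square)
    finally show "\<exists>y. DERIV \<phi> t :> y \<and> y \<le> 0"
      using deriv by (auto simp: inner_diff_left)
  qed simp
  then show ?thesis
    unfolding \<phi>_def by simp
qed

lemma sharp_step_model_bound:
  fixes nrm :: "'a::euclidean_space \<Rightarrow> real"
  assumes nrm: "is_norm nrm" and L: "0 < L" and sharp: "is_sharp nrm sharp"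
  shows "g \<bullet> (- (dual_norm nrm g / L) *\<^sub>R sharp g)
           + L / 2 * (nrm (- (dual_norm nrm g / L) *\<^sub>R sharp g))\<^sup>2
         \<le> - (dual_norm nrm g)\<^sup>2 / (2 * L)"
proof -
  define D where "D = dual_norm nrm g"
  define s where "s = sharp g"
  have s: "nrm s \<le> 1" "g \<bullet> s = D"
    using sharp unfolding is_sharp_def D_def s_def by auto
  have D: "0 \<le> D"
    unfolding D_def by (rule dual_norm_nonneg[OF nrm])
  have "nrm (- (D / L) *\<^sub>R s) = D / L * nrm s"
    using is_norm_scaleR[OF nrm, of "- (D / L)" s] D L by simp
  also have "\<dots> \<le> D / L"
    using s D L mult_left_le[of "nrm s" "D / L"] by simp
  finally have "(nrm (- (D / L) *\<^sub>R s))\<^sup>2 \<le> (D / L)\<^sup>2"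
    by (rule power_mono) (simp add: is_norm_nonneg[OF nrm])
  then have "g \<bullet> (- (D / L) *\<^sub>R s) + L / 2 * (nrm (- (D / L) *\<^sub>R s))\<^sup>2
      \<le> - D * (D / L) + L / 2 * (D / L)\<^sup>2"
    using s L by simp
  also have "\<dots> = - D\<^sup>2 / (2 * L)"
    using L by (simp add: field_simps power2_eq_square)
  finally show ?thesis
    unfolding D_def s_def .
qed

lemma sharp_step_decrease:
  fixes nrm :: "'a::euclidean_space \<Rightarrow> real"
  assumes nrm: "is_norm nrm" and smooth: "L_smooth nrm f gradf L" and sharp: "is_sharp nrm sharp"
  shows "f (p - (dual_norm nrm (gradf p) / L) *\<^sub>R sharp (gradf p))
           \<le> f p - (dual_norm nrm (gradf p))\<^sup>2 / (2 * L)"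
  using L_smooth_upper_bound[OF nrm smooth, of p "- (dual_norm nrm (gradf p) / L) *\<^sub>R sharp (gradf p)"]
    sharp_step_model_bound[OF nrm _ sharp, of L "gradf p"] smooth
  by (simp add: L_smooth_def)

lemma exact_line_search_first_order:
  assumes grad: "is_gradient f gradf" and \<beta>: "0 \<le> \<beta>" "\<beta> \<le> 1"
    and min: "\<forall>b\<in>{0..1}. f (v + \<beta> *\<^sub>R (x - v)) \<le> f (v + b *\<^sub>R (x - v))"
  shows "0 \<le> gradf (v + \<beta> *\<^sub>R (x - v)) \<bullet> (v - (v + \<beta> *\<^sub>R (x - v)))"
proof (cases "\<beta> = 0")
  case False
  then have pos: "0 < \<beta>"
    using \<beta> by simp
  have "gradf (v + \<beta> *\<^sub>R (x - v)) \<bullet> (x - v) \<le> 0"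
  proof (rule ccontr)
    assume "\<not> ?thesis"
    then obtain e where e: "0 < e"
      "\<And>s. 0 < s \<Longrightarrow> s < e \<Longrightarrow> f (v + (\<beta> - s) *\<^sub>R (x - v)) < f (v + \<beta> *\<^sub>R (x - v))"
      using DERIV_pos_inc_left[OF has_real_derivative_along_line[OF grad, of v "x - v" \<beta>]] by auto
    define s where "s = min e \<beta> / 2"
    have "0 < s" "s < e" "s \<le> \<beta>"
      using e pos by (auto simp: s_def)
    then have "f (v + (\<beta> - s) *\<^sub>R (x - v)) < f (v + \<beta> *\<^sub>R (x - v))"
      using e by blast
    moreover have "\<beta> - s \<in> {0..1}"
      using \<open>0 < s\<close> \<open>s \<le> \<beta>\<close> \<beta> by auto
    ultimately show False
      using min by fastforce
  qed
  with pos show ?thesis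
    by (simp add: inner_diff_right mult_le_0_iff)
qed simp

lemma bregman_nonneg:
  assumes "prox_function nrm d gradd"
  shows "0 \<le> bregman d gradd x z"
proof -
  have "1/2 * (nrm (x - z))\<^sup>2 \<le> bregman d gradd x z"
    using assms unfolding prox_function_def bregman_def by blast
  then show ?thesis
    using zero_le_power2[of "nrm (x - z)"] by linarith
qed

lemma prox_plus_affine_min_growth:
  assumes prox: "prox_function nrm d gradd"
    and F: "\<And>z. F z = d z + q \<bullet> z + c"
    and min: "\<And>z. F v \<le> F z"
  shows "F v + 1/2 * (nrm (z - v))\<^sup>2 \<le> F z"
proof -
  have grad: "is_gradient d gradd"
    and strong: "\<And>x y. 1/2 * (nrm (y - x))\<^sup>2 \<le> d y - d x - gradd x \<bullet> (y - x)"
    using prox unfolding prox_function_def by auto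
  have "DERIV (\<lambda>t. F (v + t *\<^sub>R (z - v))) 0 :> gradd (v + 0 *\<^sub>R (z - v)) \<bullet> (z - v) + q \<bullet> (z - v)"
    unfolding F
    by (rule has_real_derivative_along_line[OF grad] derivative_eq_intros refl
        | simp add: inner_add_right)+
  then have "gradd (v + 0 *\<^sub>R (z - v)) \<bullet> (z - v) + q \<bullet> (z - v) = 0"
    by (rule DERIV_local_min[where d=1]) (auto intro: min)
  then show ?thesis
    using strong[where x=v and y=z] unfolding F by (simp add: inner_diff_right algebra_simps)
qed

lemma agm_psi_Suc:
  "agm_psi f gradf d gradd x0 a y (Suc k) z
     = agm_psi f gradf d gradd x0 a y k z + a (Suc k) * (f (y k) + gradf (y k) \<bullet> (z - y k))"
  unfolding agm_psi_def by simp

lemma agm_psi_eq_prox_plus_affine: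
  obtains q c where "\<And>z. agm_psi f gradf d gradd x0 a y k z = d z + q \<bullet> z + c"
proof (induction k arbitrary: thesis)
  case 0
  show ?case
    by (rule 0[of "- gradd x0" "gradd x0 \<bullet> x0 - d x0"])
       (simp add: agm_psi_def bregman_def inner_diff_right)
next
  case (Suc k)
  obtain q c where "\<And>z. agm_psi f gradf d gradd x0 a y k z = d z + q \<bullet> z + c"
    using Suc.IH by blast
  then show ?case
    by (intro Suc.prems[of "q + a (Suc k) *\<^sub>R gradf (y k)" "c + a (Suc k) * (f (y k) - gradf (y k) \<bullet> y k)"])
       (simp add: agm_psi_Suc inner_diff_right inner_add_left algebra_simps)
qed

lemma quadratic_growth_step:
  fixes u w k :: real
  assumes "0 \<le> w" "w \<le> u" "0 < u" "u \<le> (u - w)\<^sup>2" "k\<^sup>2 / 4 \<le> w" "0 \<le> k"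
  shows "(k + 1)\<^sup>2 / 4 \<le> u"
proof -
  define s where "s = sqrt u"
  have u: "0 < s" "s\<^sup>2 = u"
    using assms(3) by (simp_all add: s_def)
  have "s\<^sup>2 \<le> (u - w)\<^sup>2"
    using assms(4) u(2) by linarith
  then have "s \<le> u - w"
    by (rule power2_le_imp_le) (use assms(2) in linarith)
  then have gap: "k\<^sup>2 / 4 \<le> s\<^sup>2 - s"
    using u assms(5) by linarith
  have "0 \<le> k\<^sup>2 / 4"
    by simp
  then have "s \<le> s\<^sup>2"
    using gap by linarith
  then have "0 \<le> s * (s - 1)"
    by (simp add: power2_eq_square algebra_simps)
  with u(1) have s1: "1 \<le> s"
    by (simp add: zero_le_mult_iff)
  have "(k / 2)\<^sup>2 \<le> (s - 1/2)\<^sup>2"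
    using gap by (simp add: power2_eq_square algebra_simps)
  then have "k / 2 \<le> s - 1/2"
    by (rule power2_le_imp_le) (use s1 in linarith)
  then have "(k + 1) / 2 \<le> s"
    by (simp add: field_simps)
  then have "((k + 1) / 2)\<^sup>2 \<le> s\<^sup>2"
    by (rule power_mono) (use assms(6) in simp)
  then show ?thesis
    using u by (simp add: power_divide)
qed

lemma exists_pos_root_sq_eq:
  fixes p A :: real
  assumes "0 < p" "0 \<le> A"
  obtains s where "0 < s" "s\<^sup>2 = p * (A + s)"
proof
  define r where "r = sqrt (p\<^sup>2 + 4 * p * A)"
  have r: "0 \<le> r" "r\<^sup>2 = p\<^sup>2 + 4 * p * A"
    using assms by (auto simp: r_def)
  show "0 < (p + r) / 2"
    using assms r by simp
  show "((p + r) / 2)\<^sup>2 = p * (A + (p + r) / 2)"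
    using r by (simp add: power2_eq_square field_simps)
qed

lemma option_a_step:
  fixes nrm :: "'a::euclidean_space \<Rightarrow> real"
  assumes nrm: "is_norm nrm" and smooth: "L_smooth nrm f gradf L" and sharp: "is_sharp nrm sharp"
    and model_min: "\<forall>z. f yk + gradf yk \<bullet> (xn - yk) + L / 2 * (nrm (xn - yk))\<^sup>2
                     \<le> f yk + gradf yk \<bullet> (z - yk) + L / 2 * (nrm (z - yk))\<^sup>2"
    and an: "0 < an" "an\<^sup>2 / (Ak + an) = 1 / L" and Ak: "0 \<le> Ak"
  shows "f xn \<le> f yk - (dual_norm nrm (gradf yk))\<^sup>2 / (2 * L)"
    and "Ak + an \<le> L * an\<^sup>2"
    and "(Ak + an) * f xn \<le> (Ak + an) * f yk - an\<^sup>2 * (dual_norm nrm (gradf yk))\<^sup>2 / 2"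
proof -
  define D where "D = dual_norm nrm (gradf yk)"
  have L: "0 < L"
    using smooth unfolding L_smooth_def by simp
  show decrease: "f xn \<le> f yk - D\<^sup>2 / (2 * L)"
    using L_smooth_upper_bound[OF nrm smooth, of yk "xn - yk"]
      model_min[rule_format, of "yk + - (D / L) *\<^sub>R sharp (gradf yk)"]
      sharp_step_model_bound[OF nrm L sharp, of "gradf yk"]
    unfolding D_def by simp
  have AS: "Ak + an = L * an\<^sup>2"
    using an Ak L by (simp add: field_simps)
  then show "Ak + an \<le> L * an\<^sup>2"
    by simp
  have "(Ak + an) * f xn \<le> (Ak + an) * (f yk - D\<^sup>2 / (2 * L))"
    using decrease an Ak by (simp add: mult_left_mono)
  also have "\<dots> = (Ak + an) * f yk - an\<^sup>2 * D\<^sup>2 / 2"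
    using AS L by (simp add: field_simps)
  finally show "(Ak + an) * f xn \<le> (Ak + an) * f yk - an\<^sup>2 * D\<^sup>2 / 2" .
qed

lemma option_b_step:
  fixes nrm :: "'a::euclidean_space \<Rightarrow> real"
  assumes nrm: "is_norm nrm" and smooth: "L_smooth nrm f gradf L" and sharp: "is_sharp nrm sharp"
    and nonzero: "gradf yk \<noteq> 0" and Ak: "0 \<le> Ak"
    and search: "\<forall>t\<ge>0. f (yk - hn *\<^sub>R sharp (gradf yk)) \<le> f (yk - t *\<^sub>R sharp (gradf yk))"
    and xn: "xn = yk - hn *\<^sub>R sharp (gradf yk)"
    and an: "is_arg_max id (\<lambda>s. f yk - s\<^sup>2 / (2 * (Ak + s)) * (dual_norm nrm (gradf yk))\<^sup>2 = f xn) an"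
  shows "f xn \<le> f yk - (dual_norm nrm (gradf yk))\<^sup>2 / (2 * L)"
    and "0 < an"
    and "Ak + an \<le> L * an\<^sup>2"
    and "(Ak + an) * f xn = (Ak + an) * f yk - an\<^sup>2 * (dual_norm nrm (gradf yk))\<^sup>2 / 2"
proof -
  define D where "D = dual_norm nrm (gradf yk)"
  define c where "c = f yk - f xn"
  have L: "0 < L"
    using smooth unfolding L_smooth_def by simp
  have D: "0 < D"
    unfolding D_def using dual_norm_pos[OF nrm nonzero] .
  show decrease: "f xn \<le> f yk - D\<^sup>2 / (2 * L)"
    using search[rule_format, of "D / L"] sharp_step_decrease[OF nrm smooth sharp, of yk] D L xn
    unfolding D_def by simp
  moreover have "0 < D\<^sup>2 / (2 * L)"
    using D L by simp
  ultimately have c: "D\<^sup>2 / (2 * L) \<le> c" "0 < c"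
    unfolding c_def by linarith+
  have an_eq: "an\<^sup>2 / (2 * (Ak + an)) * D\<^sup>2 = c"
    using an unfolding is_arg_max_def c_def D_def by auto
  have pos: "0 < Ak + an"
  proof (rule ccontr)
    assume "\<not> 0 < Ak + an"
    then have "an\<^sup>2 / (2 * (Ak + an)) * D\<^sup>2 \<le> 0"
      by (intro mult_nonpos_nonneg) (auto simp: divide_nonneg_nonpos)
    with an_eq c show False
      by simp
  qed
  have eq: "an\<^sup>2 * D\<^sup>2 = 2 * c * (Ak + an)"
    using an_eq pos by (simp add: field_simps)
  then show "(Ak + an) * f xn = (Ak + an) * f yk - an\<^sup>2 * D\<^sup>2 / 2"
    unfolding c_def by (simp add: algebra_simps)
  have "(Ak + an) / L * D\<^sup>2 \<le> an\<^sup>2 * D\<^sup>2"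
    using mult_right_mono[OF c(1), of "2 * (Ak + an)"] pos L eq by (simp add: field_simps)
  then have "(Ak + an) / L \<le> an\<^sup>2"
    by (rule mult_right_le_imp_le) (use D in simp)
  then show "Ak + an \<le> L * an\<^sup>2"
    using L by (simp add: field_simps)
  txt \<open>The largest root of the defining equation is at least its positive root.\<close>
  obtain s where s: "0 < s" "s\<^sup>2 = (2 * c / D\<^sup>2) * (Ak + s)"
    using exists_pos_root_sq_eq[of "2 * c / D\<^sup>2" Ak] c D Ak by auto
  then have "f yk - s\<^sup>2 / (2 * (Ak + s)) * D\<^sup>2 = f xn"
    using Ak D unfolding c_def by (simp add: field_simps)
  then have "\<not> an < s"
    using an unfolding is_arg_max_def D_def by auto
  with s show "0 < an"
    by simp
qed

lemma ceiling_half_bounds: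
  fixes N :: nat
  assumes "1 \<le> N"
  defines "m \<equiv> nat \<lceil>real N / 2\<rceil>"
  shows "1 \<le> m" "m \<le> N" "real N ^ 3 \<le> 8 * (real m)\<^sup>2 * (real N + 1 - real m)"
proof -
  have lower: "real N \<le> 2 * real m"
    unfolding m_def by linarith
  have "2 * \<lceil>real N / 2\<rceil> < int N + 2"
    by linarith
  then have upper: "2 * real m \<le> real N + 1"
    unfolding m_def by linarith
  show "1 \<le> m" "m \<le> N"
    using lower upper assms by linarith+
  have "(real N)\<^sup>2 \<le> (2 * real m)\<^sup>2"
    using lower by (intro power_mono) auto
  moreover have "real N \<le> 2 * (real N + 1 - real m)"
    using upper by simp
  ultimately have "(real N)\<^sup>2 * real N \<le> (2 * real m)\<^sup>2 * (2 * (real N + 1 - real m))"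
    by (intro mult_mono) auto
  then show "real N ^ 3 \<le> 8 * (real m)\<^sup>2 * (real N + 1 - real m)"
    by (simp add: power2_eq_square power3_eq_cube algebra_simps)
qed

locale agmsdr =
  fixes nrm :: "'a::euclidean_space \<Rightarrow> real"
    and f d :: "'a \<Rightarrow> real" and gradf gradd sharp :: "'a \<Rightarrow> 'a"
    and L :: real and xs :: 'a and optA :: bool and N :: nat
    and x v y :: "nat \<Rightarrow> 'a" and beta h a A :: "nat \<Rightarrow> real"
  assumes nrm: "is_norm nrm"
    and sharp: "is_sharp nrm sharp"
    and prox: "prox_function nrm d gradd"
    and smooth: "L_smooth nrm f gradf L"
    and wqc: "weakly_quasi_convex f gradf 1 xs"
    and run: "AGMsDR_run nrm f gradf d gradd sharp L optA N x v y beta h a A"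
    and grad_nonzero: "\<forall>k<N. gradf (y k) \<noteq> 0"
begin

abbreviation psi :: "nat \<Rightarrow> 'a \<Rightarrow> real" where
  "psi k \<equiv> agm_psi f gradf d gradd (x 0) a y k"

abbreviation gnorm :: "nat \<Rightarrow> real" where
  "gnorm k \<equiv> dual_norm nrm (gradf (y k))"

abbreviation V :: real where
  "V \<equiv> bregman d gradd xs (x 0)"

lemma L_pos: "0 < L"
  using smooth unfolding L_smooth_def by simp

lemma f_min: "f xs \<le> f z"
  using wqc unfolding weakly_quasi_convex_def by simp

lemma quasi_convex: "f z - f xs \<le> gradf z \<bullet> (z - xs)"
  using wqc unfolding weakly_quasi_convex_def by simp

lemma A_0: "A 0 = 0"
  using run unfolding AGMsDR_run_def by simp

lemma v_0: "v 0 = x 0"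
  using run unfolding AGMsDR_run_def by simp

lemma A_Suc: "k < N \<Longrightarrow> A (Suc k) = A k + a (Suc k)"
  using run unfolding AGMsDR_run_def by simp

lemma psi_min:
  assumes "k \<le> N"
  shows "psi k (v k) \<le> psi k z"
proof (cases k)
  case 0
  then show ?thesis
    using run bregman_nonneg[OF prox, of z "x 0"]
    by (simp add: AGMsDR_run_def agm_psi_def bregman_def)
next
  case (Suc j)
  then show ?thesis
    using run assms unfolding AGMsDR_run_def by simp
qed

lemma line_search_y:
  assumes "k \<le> N"
  shows "f (y k) \<le> f (x k)" "0 \<le> gradf (y k) \<bullet> (v k - y k)"
proof -
  have \<beta>: "0 \<le> beta k" "beta k \<le> 1"
    and min: "\<forall>b\<in>{0..1}. f (v k + beta k *\<^sub>R (x k - v k)) \<le> f (v k + b *\<^sub>R (x k - v k))"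
    and y: "y k = v k + beta k *\<^sub>R (x k - v k)"
    using run assms unfolding AGMsDR_run_def by auto
  show "f (y k) \<le> f (x k)"
    using min[rule_format, of 1] y by simp
  show "0 \<le> gradf (y k) \<bullet> (v k - y k)"
    unfolding y
    using exact_line_search_first_order[OF _ \<beta> min] smooth by (simp add: L_smooth_def)
qed

lemma step_progress:
  assumes k: "k < N" and A: "0 \<le> A k"
  shows "f (x (Suc k)) \<le> f (y k) - (gnorm k)\<^sup>2 / (2 * L)"
    and "0 < a (Suc k)"
    and "A (Suc k) \<le> L * (a (Suc k))\<^sup>2"
    and "A (Suc k) * f (x (Suc k)) \<le> A (Suc k) * f (y k) - (a (Suc k))\<^sup>2 * (gnorm k)\<^sup>2 / 2"
proof -
  have step: "if optA then
           (\<forall>z. f (y k) + gradf (y k) \<bullet> (x (Suc k) - y k) + L / 2 * (nrm (x (Suc k) - y k))\<^sup>2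
                 \<le> f (y k) + gradf (y k) \<bullet> (z - y k) + L / 2 * (nrm (z - y k))\<^sup>2) \<and>
           a (Suc k) > 0 \<and> (a (Suc k))\<^sup>2 / (A k + a (Suc k)) = 1 / L
         else
           h (Suc k) \<ge> 0 \<and>
           (\<forall>t\<ge>0. f (y k - h (Suc k) *\<^sub>R sharp (gradf (y k))) \<le> f (y k - t *\<^sub>R sharp (gradf (y k)))) \<and>
           x (Suc k) = y k - h (Suc k) *\<^sub>R sharp (gradf (y k)) \<and>
           is_arg_max id (\<lambda>s. f (y k) - s\<^sup>2 / (2 * (A k + s)) * (gnorm k)\<^sup>2
                                  = f (x (Suc k))) (a (Suc k))"
    using run k unfolding AGMsDR_run_def by blast
  have "f (x (Suc k)) \<le> f (y k) - (gnorm k)\<^sup>2 / (2 * L) \<and> 0 < a (Suc k)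
    \<and> A k + a (Suc k) \<le> L * (a (Suc k))\<^sup>2
    \<and> (A k + a (Suc k)) * f (x (Suc k)) \<le> (A k + a (Suc k)) * f (y k) - (a (Suc k))\<^sup>2 * (gnorm k)\<^sup>2 / 2"
  proof (cases optA)
    case True
    then show ?thesis
      using step[unfolded if_P[OF True]] option_a_step[OF nrm smooth sharp _ _ _ A] by blast
  next
    case False
    have "gradf (y k) \<noteq> 0"
      using grad_nonzero k by blast
    moreover obtain "\<forall>t\<ge>0. f (y k - h (Suc k) *\<^sub>R sharp (gradf (y k))) \<le> f (y k - t *\<^sub>R sharp (gradf (y k)))"
      "x (Suc k) = y k - h (Suc k) *\<^sub>R sharp (gradf (y k))"
      "is_arg_max id (\<lambda>s. f (y k) - s\<^sup>2 / (2 * (A k + s)) * (gnorm k)\<^sup>2 = f (x (Suc k))) (a (Suc k))"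
      using step[unfolded if_not_P[OF False]] by blast
    ultimately show ?thesis
      using option_b_step[OF nrm smooth sharp _ A] by simp
  qed
  then show "f (x (Suc k)) \<le> f (y k) - (gnorm k)\<^sup>2 / (2 * L)" "0 < a (Suc k)"
    "A (Suc k) \<le> L * (a (Suc k))\<^sup>2"
    "A (Suc k) * f (x (Suc k)) \<le> A (Suc k) * f (y k) - (a (Suc k))\<^sup>2 * (gnorm k)\<^sup>2 / 2"
    using A_Suc[OF k] by simp_all
qed

lemma A_lower_bound: "k \<le> N \<Longrightarrow> 0 \<le> A k \<and> (real k)\<^sup>2 / 4 \<le> L * A k"
proof (induction k)
  case 0
  then show ?case
    using A_0 by simp
next
  case (Suc k)
  then have k: "k < N" "0 \<le> A k" "(real k)\<^sup>2 / 4 \<le> L * A k"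
    by auto
  have a: "0 < a (Suc k)" "A (Suc k) \<le> L * (a (Suc k))\<^sup>2"
    using step_progress[OF k(1,2)] by auto
  have A: "A (Suc k) = A k + a (Suc k)"
    using A_Suc[OF k(1)] .
  have "(real k + 1)\<^sup>2 / 4 \<le> L * A (Suc k)"
  proof (rule quadratic_growth_step)
    show "0 \<le> L * A k" "L * A k \<le> L * A (Suc k)" "0 < L * A (Suc k)"
      using A a k L_pos by simp_all
    have "L * A (Suc k) \<le> L * (L * (a (Suc k))\<^sup>2)"
      using a L_pos by simp
    also have "\<dots> = (L * A (Suc k) - L * A k)\<^sup>2"
      using A by (simp add: power2_eq_square algebra_simps)
    finally show "L * A (Suc k) \<le> (L * A (Suc k) - L * A k)\<^sup>2" .
  qed (use k in simp_all)
  then show ?case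
    using A a k by (simp add: add.commute)
qed

lemma psi_growth:
  assumes "k \<le> N"
  shows "psi k (v k) + 1/2 * (nrm (z - v k))\<^sup>2 \<le> psi k z"
proof -
  obtain q c where "\<And>z. psi k z = d z + q \<bullet> z + c"
    using agm_psi_eq_prox_plus_affine by blast
  then show ?thesis
    using prox_plus_affine_min_growth[OF prox] psi_min[OF assms] by blast
qed

lemma A_f_le_psi_min: "k \<le> N \<Longrightarrow> A k * f (x k) \<le> psi k (v k)"
proof (induction k)
  case 0
  then show ?case
    using A_0 v_0 by (simp add: agm_psi_def bregman_def)
next
  case (Suc k)
  then have k: "k < N" "k \<le> N"
    by auto
  define a' where "a' = a (Suc k)"
  define t where "t = nrm (v (Suc k) - v k)"
  have A: "0 \<le> A k"
    using A_lower_bound k by auto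
  have a': "0 < a'"
    using step_progress(2)[OF k(1) A] unfolding a'_def .
  have inner: "- (gnorm k * t) \<le> gradf (y k) \<bullet> (v (Suc k) - v k)"
    using inner_le_dual_norm[OF nrm, of "gradf (y k)" "v k - v (Suc k)"]
    unfolding t_def by (simp add: is_norm_minus_commute[OF nrm] inner_diff_right)
  have linear: "- a' * (gnorm k * t) \<le> a' * (gradf (y k) \<bullet> (v (Suc k) - v k))"
    using mult_left_mono[OF inner less_imp_le[OF a']] by simp
  have quadratic: "- (a'\<^sup>2 * (gnorm k)\<^sup>2 / 2) \<le> 1/2 * t\<^sup>2 - a' * (gnorm k * t)"
    using zero_le_power2[of "t - a' * gnorm k"] by (simp add: power2_eq_square algebra_simps)
  have "A (Suc k) * f (x (Suc k)) \<le> A (Suc k) * f (y k) - a'\<^sup>2 * (gnorm k)\<^sup>2 / 2"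
    using step_progress(4)[OF k(1) A] unfolding a'_def .
  also have "\<dots> \<le> A k * f (x k) + a' * f (y k) + 1/2 * t\<^sup>2
      + a' * (gradf (y k) \<bullet> (v (Suc k) - v k)) + a' * (gradf (y k) \<bullet> (v k - y k))"
  proof -
    have "A (Suc k) * f (y k) = A k * f (y k) + a' * f (y k)"
      unfolding a'_def A_Suc[OF k(1)] by (simp add: algebra_simps)
    moreover have "A k * f (y k) \<le> A k * f (x k)"
      using line_search_y(1)[OF k(2)] A by (rule mult_left_mono)
    moreover have "0 \<le> a' * (gradf (y k) \<bullet> (v k - y k))"
      using line_search_y(2)[OF k(2)] a' by simp
    ultimately show ?thesis
      using linear quadratic by linarith
  qed
  also have "\<dots> \<le> psi k (v (Suc k)) + a' * (f (y k) + gradf (y k) \<bullet> (v (Suc k) - y k))"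
    using Suc.IH[OF k(2)] psi_growth[OF k(2), of "v (Suc k)"]
    unfolding t_def by (simp add: inner_diff_right algebra_simps)
  also have "\<dots> = psi (Suc k) (v (Suc k))"
    unfolding a'_def by (rule agm_psi_Suc[symmetric])
  finally show ?case .
qed

lemma psi_xs_le: "k \<le> N \<Longrightarrow> psi k xs \<le> V + A k * f xs"
proof (induction k)
  case 0
  then show ?case
    using A_0 by (simp add: agm_psi_def)
next
  case (Suc k)
  then have k: "k < N" "k \<le> N"
    by auto
  have "0 < a (Suc k)"
    using step_progress(2)[OF k(1)] A_lower_bound[OF k(2)] by blast
  moreover have "f (y k) + gradf (y k) \<bullet> (xs - y k) \<le> f xs"
    using quasi_convex[of "y k"] by (simp add: inner_diff_right)
  ultimately have "a (Suc k) * (f (y k) + gradf (y k) \<bullet> (xs - y k)) \<le> a (Suc k) * f xs"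
    by (simp add: mult_left_mono)
  then show ?case
    using Suc.IH[OF k(2)] A_Suc[OF k(1)] by (simp add: agm_psi_Suc algebra_simps)
qed

lemma function_gap:
  assumes "1 \<le> k" "k \<le> N"
  shows "f (x k) - f xs \<le> 4 * L * V / (real k)\<^sup>2"
proof -
  have growth: "(real k)\<^sup>2 / 4 \<le> L * A k"
    using A_lower_bound assms(2) by blast
  have "0 < (real k)\<^sup>2 / 4"
    using assms(1) by simp
  then have "0 < L * A k"
    using growth by linarith
  then have A: "0 < A k"
    using L_pos by (simp add: zero_less_mult_iff)
  have "A k * f (x k) \<le> V + A k * f xs"
    using A_f_le_psi_min[OF assms(2)] psi_min[OF assms(2), of xs] psi_xs_le[OF assms(2)] by linarith
  then have "f (x k) - f xs \<le> V / A k"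
    using A by (simp add: field_simps)
  also have "\<dots> \<le> 4 * L * V / (real k)\<^sup>2"
  proof -
    have "V * (real k)\<^sup>2 \<le> V * (4 * L * A k)"
      using growth bregman_nonneg[OF prox] by (intro mult_left_mono) auto
    then show ?thesis
      using A assms(1) by (simp add: field_simps)
  qed
  finally show ?thesis .
qed

lemma grad_sq_sum_le: "j \<le> N \<Longrightarrow> (\<Sum>k = j..N. (gnorm k)\<^sup>2) \<le> 2 * L * (f (y j) - f xs)"
proof (induction j rule: inc_induct)
  case base
  have "f xs \<le> f (y N) - (gnorm N)\<^sup>2 / (2 * L)"
    using f_min sharp_step_decrease[OF nrm smooth sharp, of "y N"] by (rule order_trans)
  then show ?case
    using L_pos by (simp add: field_simps)
next
  case (step j)
  have "{j..N} = insert j {Suc j..N}"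
    using step(2) by auto
  then have "(\<Sum>k = j..N. (gnorm k)\<^sup>2) = (gnorm j)\<^sup>2 + (\<Sum>k = Suc j..N. (gnorm k)\<^sup>2)"
    by simp
  also have "\<dots> \<le> (gnorm j)\<^sup>2 + 2 * L * (f (y (Suc j)) - f xs)"
    using step.IH by simp
  also have "\<dots> \<le> (gnorm j)\<^sup>2 + 2 * L * (f (x (Suc j)) - f xs)"
    using line_search_y(1)[of "Suc j"] step(2) L_pos by simp
  also have "\<dots> \<le> 2 * L * (f (y j) - f xs)"
    using step_progress(1)[OF step(2)] A_lower_bound[of j] step(2) L_pos
    by (simp add: field_simps)
  finally show ?case .
qed

lemma min_grad_sq_le:
  assumes N: "1 \<le> N"
  shows "Min ((\<lambda>k. (gnorm k)\<^sup>2) ` {nat \<lceil>real N / 2\<rceil>..N}) \<le> 64 * L\<^sup>2 * V / real N ^ 3"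
proof -
  define m where "m = nat \<lceil>real N / 2\<rceil>"
  define M where "M = Min ((\<lambda>k. (gnorm k)\<^sup>2) ` {m..N})"
  have m: "1 \<le> m" "m \<le> N" "real N ^ 3 \<le> 8 * (real m)\<^sup>2 * (real N + 1 - real m)"
    using ceiling_half_bounds[OF N] unfolding m_def by auto
  have "(real N + 1 - real m) * M \<le> (\<Sum>k = m..N. (gnorm k)\<^sup>2)"
    using sum_bounded_below[of "{m..N}" M "\<lambda>k. (gnorm k)\<^sup>2"] m(2)
    unfolding M_def by (simp add: of_nat_diff add.commute)
  also have "\<dots> \<le> 2 * L * (f (y m) - f xs)"
    using grad_sq_sum_le[OF m(2)] .
  also have "\<dots> \<le> 2 * L * (f (x m) - f xs)"
    using line_search_y(1)[OF m(2)] L_pos by simp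
  also have "\<dots> \<le> 2 * L * (4 * L * V / (real m)\<^sup>2)"
    using function_gap[OF m(1,2)] L_pos by (intro mult_left_mono) auto
  finally have "M * (8 * (real m)\<^sup>2 * (real N + 1 - real m)) \<le> 64 * L\<^sup>2 * V"
    using m(1) by (simp add: field_simps power2_eq_square)
  moreover have "0 \<le> M"
    unfolding M_def using m(2) by (simp add: Min_le_iff)
  ultimately have "M * real N ^ 3 \<le> 64 * L\<^sup>2 * V"
    using m(3) by (meson mult_left_mono order_trans)
  then show ?thesis
    using N unfolding M_def m_def by (simp add: field_simps)
qed

end

theorem mainTheorem4:
  fixes nrm :: "'a::euclidean_space \<Rightarrow> real"
    and f d :: "'a \<Rightarrow> real" and gradf gradd sharp :: "'a \<Rightarrow> 'a"
    and L :: real and xs :: 'a and optA :: bool and N :: nat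
    and x v y :: "nat \<Rightarrow> 'a" and beta h a A :: "nat \<Rightarrow> real"
  assumes "is_norm nrm"
    and "is_sharp nrm sharp"
    and "prox_function nrm d gradd"
    and "L_smooth nrm f gradf L"
    and "weakly_quasi_convex f gradf 1 xs"
    and "N \<ge> 1"
    and "AGMsDR_run nrm f gradf d gradd sharp L optA N x v y beta h a A"
    and "\<forall>k<N. gradf (y k) \<noteq> 0"
  shows "Min ((\<lambda>k. (dual_norm nrm (gradf (y k)))\<^sup>2) ` {nat \<lceil>real N / 2\<rceil>..N})
           \<le> 64 * L\<^sup>2 * bregman d gradd xs (x 0) / (real N) ^ 3 \<and>
         f (x N) - f xs \<le> 4 * L * bregman d gradd xs (x 0) / (real N)\<^sup>2"
proof -
  interpret agmsdr nrm f d gradf gradd sharp L xs optA N x v y beta h a A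
    using assms by unfold_locales
  show ?thesis
    using min_grad_sq_le function_gap[of N] \<open>N \<ge> 1\<close> by simp
qed

end
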